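(* Fix parameters $\gamma\in(0,1)$, $a\in(1,1/\gamma)$ and $\kappa\in(0,1]$. For large $T$, with $N=[T^{\kappa}]$ and with $f$, $\mathcal{M}$, $R$, $\Phi$ as defined in the context, \[ \int_{-\infty}^{\infty}|R(t)|^2\,\Phi\Big(\frac tT\Big)\,dt \ll T\sum_{n\in\mathcal{M}}f(n)^2, \] with an implied constant independent of $T$.
   Context: Write $\log_2x=\log\log x$, $\log_3 x=\log\log\log x$, and $\Phi(t):=e^{-t^2/2}$. Let $P$ be the set of primes $p$ with $e\log N\log_2N<p\le \log N\exp((\log_2N)^{\gamma})\log_2N$. Let $f$ be the multiplicative function supported on squarefree integers with $f(p)=\sqrt{\frac{\log N\log_2N}{\log_3N}}\cdot\frac{1}{\sqrt p(\log p-\log_2N-\log_3N)}$ for $p\in P$ and $f(p)=0$ for primes $p\notin P$. For $k=1,\dots,[(\log_2N)^{\gamma}]$ let $P_k$ be the set of primes with $e^k\log N\log_2N<p\le e^{k+1}\log N\log_2N$ and $M_k$ the set of integers having at least $\frac{a\log N}{k^2\log_3N}$ prime divisors in $P_k$; set $\mathcal{M}:=\operatorname{supp}(f)\setminus\bigcup_kM_k$. Let $\mathcal{J}$ be the set of integers $j$ such that $[(1+T^{-1})^j,(1+T^{-1})^{j+1})\cap\mathcal{M}\neq\emptyset$, let $m_j$ be the minimum of this intersection, $\mathcal{M}':=\{m_j:j\in\mathcal{J}\}$, and $r(m_j):=\big(\sum_{n\in\mathcal{M},\,(1+T^{-1})^{j-1}\le n\le(1+T^{-1})^{j+2}}f(n)^2\big)^{1/2}$.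 Finally $R(t):=\sum_{m\in\mathcal{M}'}r(m)m^{-it}$. *)

theory Defs
  imports "HOL-Analysis.Analysis" "HOL-Computational_Algebra.Computational_Algebra"
begin

definition L2 :: "real \<Rightarrow> real" where "L2 x = ln (ln x)"
definition L3 :: "real \<Rightarrow> real" where "L3 x = ln (ln (ln x))"

definition Phi :: "real \<Rightarrow> real" where "Phi t = exp (- (t^2) / 2)"

definition Pset :: "real \<Rightarrow> nat \<Rightarrow> nat set" where
  "Pset \<gamma> N = {p. prime p \<and> exp 1 * ln (real N) * L2 (real N) < real p \<and>
      real p \<le> ln (real N) * exp (L2 (real N) powr \<gamma>) * L2 (real N)}"

definition fprime :: "real \<Rightarrow> nat \<Rightarrow> nat \<Rightarrow> real" where
  "fprime \<gamma> N p = (if p \<in> Pset \<gamma> N then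
      sqrt (ln (real N) * L2 (real N) / L3 (real N)) *
      (1 / (sqrt (real p) * (ln (real p) - L2 (real N) - L3 (real N))))
    else 0)"

definition fmult :: "real \<Rightarrow> nat \<Rightarrow> nat \<Rightarrow> real" where
  "fmult \<gamma> N n = (if squarefree n then (\<Prod>p\<in>prime_factors n. fprime \<gamma> N p) else 0)"

definition Pk :: "nat \<Rightarrow> nat \<Rightarrow> nat set" where
  "Pk N k = {p. prime p \<and> exp (real k) * ln (real N) * L2 (real N) < real p \<and>
      real p \<le> exp (real k + 1) * ln (real N) * L2 (real N)}"

definition Mk :: "real \<Rightarrow> nat \<Rightarrow> nat \<Rightarrow> nat set" where
  "Mk a N k = {n. real (card (prime_factors n \<inter> Pk N k)) \<ge>
      a * ln (real N) / ((real k)^2 * L3 (real N))}"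

definition Mcal :: "real \<Rightarrow> real \<Rightarrow> nat \<Rightarrow> nat set" where
  "Mcal \<gamma> a N = {n. fmult \<gamma> N n \<noteq> 0} -
      (\<Union>k\<in>{1..nat \<lfloor>L2 (real N) powr \<gamma>\<rfloor>}. Mk a N k)"

definition Ival :: "real \<Rightarrow> int \<Rightarrow> real set" where
  "Ival T j = {x. (1 + 1/T) powi j \<le> x \<and> x < (1 + 1/T) powi (j + 1)}"

definition Jset :: "real \<Rightarrow> real \<Rightarrow> nat \<Rightarrow> real \<Rightarrow> int set" where
  "Jset \<gamma> a N T = {j. \<exists>n\<in>Mcal \<gamma> a N. real n \<in> Ival T j}"

definition mj :: "real \<Rightarrow> real \<Rightarrow> nat \<Rightarrow> real \<Rightarrow> int \<Rightarrow> nat" where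
  "mj \<gamma> a N T j = Min {n \<in> Mcal \<gamma> a N. real n \<in> Ival T j}"

definition Mprime :: "real \<Rightarrow> real \<Rightarrow> nat \<Rightarrow> real \<Rightarrow> nat set" where
  "Mprime \<gamma> a N T = mj \<gamma> a N T ` Jset \<gamma> a N T"

definition rj :: "real \<Rightarrow> real \<Rightarrow> nat \<Rightarrow> real \<Rightarrow> int \<Rightarrow> real" where
  "rj \<gamma> a N T j = sqrt (\<Sum>n\<in>{n \<in> Mcal \<gamma> a N. (1 + 1/T) powi (j - 1) \<le> real n \<and>
       real n \<le> (1 + 1/T) powi (j + 2)}. (fmult \<gamma> N n)^2)"

definition rfun :: "real \<Rightarrow> real \<Rightarrow> nat \<Rightarrow> real \<Rightarrow> nat \<Rightarrow> real" where
  "rfun \<gamma> a N T m = rj \<gamma> a N T (THE j. j \<in> Jset \<gamma> a N T \<and> mj \<gamma> a N T j = m)"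

definition Rfun :: "real \<Rightarrow> real \<Rightarrow> nat \<Rightarrow> real \<Rightarrow> real \<Rightarrow> complex" where
  "Rfun \<gamma> a N T t = (\<Sum>m\<in>Mprime \<gamma> a N T.
      complex_of_real (rfun \<gamma> a N T m) * (of_nat m) powr (- (\<i> * complex_of_real t)))"

end

theory Submission
  imports Defs "HOL-Probability.Probability"
begin

text \<open>
  Writing \<open>x\<^sub>j = log m\<^sub>j\<close>, the square \<open>|R(t)|\<^sup>2\<close> is a double sum of
  \<open>r(m\<^sub>j) r(m\<^sub>k) cos (t (x\<^sub>j - x\<^sub>k))\<close>, and the Gaussian weight integrates each term to
  \<open>T \<surd>(2\<pi>) exp (-(T (x\<^sub>j - x\<^sub>k))\<^sup>2 / 2)\<close>. Since \<open>m\<^sub>j\<close> lies in the \<open>j\<close>-th window of ratio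
  \<open>1 + 1/T\<close>, the points \<open>T x\<^sub>j\<close> are spaced by at least about \<open>1/2\<close>, so this kernel decays
  geometrically in \<open>|j - k|\<close> and the Schur test bounds the double sum by
  \<open>T \<Sum>\<^sub>j r(m\<^sub>j)\<^sup>2\<close>. Finally each \<open>n \<in> \<M>\<close> occurs in at most four of the sums
  \<open>r(m\<^sub>j)\<^sup>2\<close>, which gives \<open>\<Sum>\<^sub>j r(m\<^sub>j)\<^sup>2 \<le> 4 \<Sum>\<^sub>n\<^sub>\<in>\<^sub>\<M> f(n)\<^sup>2\<close>.
\<close>

lemma has_integral_cos_mult_Phi:
  fixes T l :: real
  assumes T: "T > 0"
  shows "((\<lambda>t. cos (t * l) * Phi (t / T)) has_integral T * sqrt (2*pi) * exp (- ((T*l)^2) / 2)) UNIV"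
proof -
  define s where "s = T * l"
  interpret real_distribution std_normal_distribution by (rule real_dist_normal_dist)
  have i: "integrable std_normal_distribution (\<lambda>x. iexp (s * x))"
    by (rule integrable_iexp) auto
  have ir: "integrable std_normal_distribution (\<lambda>x. cos (s * x))"
    using integrable_Re[OF i] by (simp add: cos_exp_eq[symmetric] Re_exp)
  have "char std_normal_distribution s = complex_of_real (exp (- (s^2) / 2))"
    by (simp add: char_std_normal_distribution)
  hence "Re (CLINT x|std_normal_distribution. iexp (s * x)) = exp (- (s^2) / 2)"
    unfolding char_def by simp
  hence e: "(LINT x|std_normal_distribution. cos (s * x)) = exp (- (s^2) / 2)"
    using integral_Re[OF i] by (simp add: Re_exp)
  have g1: "integrable lborel (\<lambda>x. std_normal_density x * cos (s * x))"
    using ir by (subst (asm) integrable_density) (auto simp: normal_density_nonneg)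
  have g2: "(LINT x|lborel. std_normal_density x * cos (s * x)) = exp (- (s^2) / 2)"
    using e by (subst (asm) integral_density) (auto simp: normal_density_nonneg)
  define h where "h = (\<lambda>t. cos (t * l) * Phi (t / T))"
  have hx: "h (0 + T * x) = sqrt (2*pi) * (std_normal_density x * cos (s * x))" for x
    using T by (simp add: h_def Phi_def std_normal_density_def s_def mult_ac)
  have "integrable lborel (\<lambda>x. h (0 + T * x))"
    unfolding hx using g1 by simp
  hence hi: "integrable lborel h"
    using lborel_integrable_real_affine_iff[of T h 0] T by simp
  have "(LINT x|lborel. h x) = \<bar>T\<bar> *\<^sub>R (LINT x|lborel. h (0 + T * x))"
    by (rule lborel_integral_real_affine) (use T in simp)
  also have "\<dots> = T * sqrt (2*pi) * exp (- ((T*l)^2) / 2)"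
    unfolding hx using T g2 by (simp add: s_def)
  finally show ?thesis using has_integral_integral_lborel[OF hi] by (simp add: h_def)
qed

lemma cmod_sum_exp_squared:
  fixes c x :: "'a \<Rightarrow> real"
  assumes "finite J"
  shows "(cmod (\<Sum>j\<in>J. complex_of_real (c j) * exp (- (\<i> * complex_of_real t) * complex_of_real (x j))))^2
       = (\<Sum>j\<in>J. \<Sum>k\<in>J. c j * c k * cos (t * (x j - x k)))"
proof -
  define z where "z = (\<Sum>j\<in>J. complex_of_real (c j) * exp (- (\<i> * complex_of_real t) * complex_of_real (x j)))"
  have e: "exp (- (\<i> * complex_of_real t) * complex_of_real (x j)) = cis (- (t * x j))" for j
    by (simp add: cis_conv_exp mult_ac)
  have re: "Re z = (\<Sum>j\<in>J. c j * cos (t * x j))"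
    unfolding z_def e by (simp add: Re_sum)
  have im: "Im z = - (\<Sum>j\<in>J. c j * sin (t * x j))"
    unfolding z_def e by (simp add: Im_sum sum_negf)
  have "(cmod z)^2 = (Re z)^2 + (Im z)^2" by (simp add: cmod_power2)
  also have "\<dots> = (\<Sum>j\<in>J. \<Sum>k\<in>J. c j * c k * (cos (t * x j) * cos (t * x k) + sin (t * x j) * sin (t * x k)))"
    unfolding re im power2_eq_square minus_mult_minus sum_product
    by (simp add: sum.distrib algebra_simps)
  also have "\<dots> = (\<Sum>j\<in>J. \<Sum>k\<in>J. c j * c k * cos (t * (x j - x k)))"
    by (simp add: cos_diff right_diff_distrib)
  finally show ?thesis by (simp add: z_def)
qed

lemma has_integral_cmod_exp_sum_squared_Phi:
  fixes c x :: "'a \<Rightarrow> real" and T :: real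
  assumes "finite J" "T > 0"
  shows "((\<lambda>t. (cmod (\<Sum>j\<in>J. complex_of_real (c j) * exp (- (\<i> * complex_of_real t) * complex_of_real (x j))))^2
            * Phi (t / T))
         has_integral T * sqrt (2*pi) * (\<Sum>j\<in>J. \<Sum>k\<in>J. c j * c k * exp (- ((T * (x j - x k))^2) / 2))) UNIV"
proof -
  have "((\<lambda>t. \<Sum>j\<in>J. \<Sum>k\<in>J. c j * c k * (cos (t * (x j - x k)) * Phi (t / T)))
         has_integral (\<Sum>j\<in>J. \<Sum>k\<in>J. c j * c k * (T * sqrt (2*pi) * exp (- ((T * (x j - x k))^2) / 2)))) UNIV"
    by (intro has_integral_sum has_integral_mult_right has_integral_cos_mult_Phi assms)
  then show ?thesis
    unfolding cmod_sum_exp_squared[OF assms(1)]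
    by (simp add: sum_distrib_left sum_distrib_right mult_ac)
qed

lemma symmetric_form_le_row_sums:
  fixes c :: "'a \<Rightarrow> real"
  assumes "finite J" "\<And>j k. j \<in> J \<Longrightarrow> k \<in> J \<Longrightarrow> E j k \<ge> 0" "\<And>j k. E j k = E k j"
  shows "(\<Sum>j\<in>J. \<Sum>k\<in>J. c j * c k * E j k) \<le> (\<Sum>j\<in>J. (c j)^2 * (\<Sum>k\<in>J. E j k))"
proof -
  have "(\<Sum>j\<in>J. \<Sum>k\<in>J. c j * c k * E j k) \<le> (\<Sum>j\<in>J. \<Sum>k\<in>J. ((c j)^2 * E j k + (c k)^2 * E j k) / 2)"
  proof (intro sum_mono)
    fix j k assume "j \<in> J" "k \<in> J"
    hence E: "E j k \<ge> 0" using assms(2) by auto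
    have "2 * (c j * c k) \<le> (c j)^2 + (c k)^2" using sum_squares_bound[of "c j" "c k"] by simp
    hence "2 * (c j * c k) * E j k \<le> ((c j)^2 + (c k)^2) * E j k" using E by (rule mult_right_mono)
    thus "c j * c k * E j k \<le> ((c j)^2 * E j k + (c k)^2 * E j k) / 2" by (simp add: algebra_simps)
  qed
  also have "\<dots> = ((\<Sum>j\<in>J. \<Sum>k\<in>J. (c j)^2 * E j k) + (\<Sum>j\<in>J. \<Sum>k\<in>J. (c k)^2 * E j k)) / 2"
    by (simp add: sum.distrib sum_divide_distrib add_divide_distrib)
  also have "(\<Sum>j\<in>J. \<Sum>k\<in>J. (c k)^2 * E j k) = (\<Sum>j\<in>J. \<Sum>k\<in>J. (c j)^2 * E j k)"
    by (subst sum.swap) (simp add: assms(3))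
  also have "(\<Sum>j\<in>J. \<Sum>k\<in>J. (c j)^2 * E j k) = (\<Sum>j\<in>J. (c j)^2 * (\<Sum>k\<in>J. E j k))"
    by (simp add: sum_distrib_left)
  finally show ?thesis by simp
qed

lemma sum_power_abs_int_le:
  fixes A :: "int set" and q :: real
  assumes "finite A" "0 \<le> q" "q < 1"
  shows "(\<Sum>k\<in>A. q ^ nat \<bar>k\<bar>) \<le> 2 / (1 - q)"
proof -
  have geometric: "(\<Sum>k\<in>B. q ^ nat \<bar>k\<bar>) \<le> 1 / (1 - q)"
    if "B \<subseteq> A" "inj_on (\<lambda>k. nat \<bar>k\<bar>) B" for B
  proof -
    have "(\<Sum>k\<in>B. q ^ nat \<bar>k\<bar>) = (\<Sum>m\<in>(\<lambda>k. nat \<bar>k\<bar>) ` B. q ^ m)"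
      using that(2) by (simp add: sum.reindex)
    also have "\<dots> \<le> (\<Sum>m. q ^ m)"
      using that assms by (intro sum_le_suminf summable_geometric) (auto intro: finite_subset)
    also have "\<dots> = 1 / (1 - q)" using suminf_geometric[of q] assms by simp
    finally show ?thesis .
  qed
  have "(\<Sum>k\<in>A. q ^ nat \<bar>k\<bar>) = (\<Sum>k\<in>A \<inter> {0..}. q ^ nat \<bar>k\<bar>) + (\<Sum>k\<in>A - {0..}. q ^ nat \<bar>k\<bar>)"
    using assms(1) by (metis sum.Int_Diff)
  also have "\<dots> \<le> 1 / (1 - q) + 1 / (1 - q)"
    by (intro add_mono geometric) (auto simp: inj_on_def)
  finally show ?thesis by simp
qed

lemma ln_one_plus_inverse_ge:
  assumes T: "T \<ge> (2::real)"
  shows "1/2 \<le> T * ln (1 + 1/T)"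
proof -
  have "1/T - (1/T)^2 \<le> ln (1 + 1/T)" using T by (intro ln_one_plus_pos_lower_bound) auto
  hence "T * (1/T - (1/T)^2) \<le> T * ln (1 + 1/T)" using T by (intro mult_left_mono) auto
  moreover have "T * (1/T - (1/T)^2) = 1 - 1/T" using T by (simp add: field_simps power2_eq_square)
  moreover have "1/T \<le> 1/2" using T by (simp add: field_simps)
  ultimately show ?thesis by linarith
qed

lemma gaussian_kernel_le_geometric:
  fixes T L y z :: real and j k :: int
  assumes T: "T > 0" and TL: "1/2 \<le> T * L"
    and y: "of_int j * L \<le> y" "y < of_int (j + 1) * L"
    and z: "of_int k * L \<le> z" "z < of_int (k + 1) * L"
  shows "exp (- ((T * (y - z))^2) / 2) \<le> exp (3/8) * exp (-1/4) ^ nat \<bar>k - j\<bar>"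
proof -
  define d where "d = \<bar>k - j\<bar>"
  have "of_int d / 4 - 3/8 \<le> (T * (y - z))^2 / 2"
  proof (cases "d = 0")
    case False
    then have d1: "0 \<le> of_int d - (1::real)" by (simp add: d_def)
    have gap: "(of_int d - 1) * L \<le> \<bar>y - z\<bar>"
      using y z by (cases "j < k") (auto simp: d_def algebra_simps)
    have "(of_int d - 1) / 2 \<le> (of_int d - 1) * (T * L)"
      using mult_left_mono[OF TL d1] by simp
    also have "\<dots> \<le> T * \<bar>y - z\<bar>"
      using mult_left_mono[OF gap, of T] T by (simp add: mult_ac)
    also have "\<dots> = \<bar>T * (y - z)\<bar>" using T by (simp add: abs_mult)
    finally have "((of_int d - 1) / 2)^2 \<le> (T * (y - z))^2"
      using d1 power_mono[of "(of_int d - 1) / 2" "\<bar>T * (y - z)\<bar>" 2] by simp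
    moreover have "of_int d / 2 - 3/4 \<le> ((of_int d - 1) / 2 :: real)^2"
      using zero_le_power2[of "of_int d - 2 :: real"] by (simp add: power2_eq_square field_simps)
    ultimately show ?thesis by linarith
  qed (use zero_le_power2[of "T * (y - z)"] in linarith)
  then have "exp (- ((T * (y - z))^2) / 2) \<le> exp (3/8 + of_nat (nat d) * (-1/4))"
    by (simp add: d_def)
  also have "\<dots> = exp (3/8) * exp (-1/4) ^ nat d"
    by (simp only: exp_add exp_of_nat_mult)
  finally show ?thesis by (simp add: d_def)
qed

lemma gaussian_mean_value_le:
  fixes J :: "int set" and c x :: "int \<Rightarrow> real" and T L :: real
  assumes J: "finite J" and T: "T > 0" and TL: "1/2 \<le> T * L"
    and x: "\<And>j. j \<in> J \<Longrightarrow> of_int j * L \<le> x j \<and> x j < of_int (j + 1) * L"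
  defines "F \<equiv> \<lambda>t. (cmod (\<Sum>j\<in>J. complex_of_real (c j) * exp (- (\<i> * complex_of_real t) * complex_of_real (x j))))^2
                 * Phi (t / T)"
  shows "F integrable_on UNIV \<and>
    integral UNIV F \<le> sqrt (2*pi) * exp (3/8) * (2 / (1 - exp (-1/4))) * T * (\<Sum>j\<in>J. (c j)^2)"
proof -
  define E where "E = (\<lambda>j k. exp (- ((T * (x j - x k))^2) / 2))"
  define K :: real where "K = exp (3/8) * (2 / (1 - exp (-1/4)))"
  have F: "(F has_integral T * sqrt (2*pi) * (\<Sum>j\<in>J. \<Sum>k\<in>J. c j * c k * E j k)) UNIV"
    unfolding F_def E_def by (rule has_integral_cmod_exp_sum_squared_Phi[OF J T])
  have row_sum: "(\<Sum>k\<in>J. E j k) \<le> K" if j: "j \<in> J" for j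
  proof -
    have "(\<Sum>k\<in>J. E j k) \<le> (\<Sum>k\<in>J. exp (3/8) * exp (-1/4) ^ nat \<bar>k - j\<bar>)"
      unfolding E_def using x j by (intro sum_mono gaussian_kernel_le_geometric[OF T TL]) auto
    also have "\<dots> = exp (3/8) * (\<Sum>k\<in>(\<lambda>k. k - j) ` J. exp (-1/4) ^ nat \<bar>k\<bar>)"
      by (simp add: sum_distrib_left sum.reindex inj_on_def)
    also have "\<dots> \<le> exp (3/8) * (2 / (1 - exp (-1/4)))"
      using J by (intro mult_left_mono sum_power_abs_int_le) auto
    finally show ?thesis by (simp add: K_def)
  qed
  have "(\<Sum>j\<in>J. \<Sum>k\<in>J. c j * c k * E j k) \<le> (\<Sum>j\<in>J. (c j)^2 * (\<Sum>k\<in>J. E j k))"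
    by (rule symmetric_form_le_row_sums[OF J]) (auto simp: E_def power_mult_distrib power2_commute)
  also have "\<dots> \<le> (\<Sum>j\<in>J. (c j)^2 * K)"
    using row_sum by (intro sum_mono mult_left_mono) auto
  also have "\<dots> = K * (\<Sum>j\<in>J. (c j)^2)"
    by (simp add: sum_distrib_left mult.commute)
  finally have "T * sqrt (2*pi) * (\<Sum>j\<in>J. \<Sum>k\<in>J. c j * c k * E j k)
      \<le> T * sqrt (2*pi) * (K * (\<Sum>j\<in>J. (c j)^2))"
    using T by (intro mult_left_mono) auto
  then show ?thesis
    using F integral_unique[OF F] by (auto simp: K_def mult_ac intro: has_integral_integrable)
qed

lemma finite_Pset: "finite (Pset \<gamma> N)"
proof -
  define B where "B = ln (real N) * exp (L2 (real N) powr \<gamma>) * L2 (real N)"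
  have "Pset \<gamma> N \<subseteq> {..nat \<lceil>B\<rceil>}"
  proof
    fix p assume "p \<in> Pset \<gamma> N"
    then have "of_int (int p) \<le> B" by (simp add: Pset_def B_def)
    then have "int p \<le> \<lceil>B\<rceil>" by (meson le_of_int_ceiling order_trans of_int_le_iff)
    then show "p \<in> {..nat \<lceil>B\<rceil>}" by simp
  qed
  then show ?thesis by (rule finite_subset) simp
qed

lemma squarefree_eq_prod_prime_factors:
  fixes n :: nat
  assumes sq: "squarefree n"
  shows "n = \<Prod>(prime_factors n)"
proof -
  have n0: "n \<noteq> 0" using sq by (metis not_squarefree_0)
  have "n = (\<Prod>p \<in> prime_factors n. p ^ multiplicity p n)"
    using n0 prime_factorization_nat by blast
  also have "\<dots> = (\<Prod>p \<in> prime_factors n. p)"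
    using sq n0 squarefree_factorial_semiring'[of n] by (intro prod.cong) auto
  finally show ?thesis by simp
qed

lemma finite_fmult_support: "finite {n. fmult \<gamma> N n \<noteq> 0}"
proof -
  have "{n. fmult \<gamma> N n \<noteq> 0} \<subseteq> Prod ` Pow (Pset \<gamma> N)"
  proof
    fix n assume "n \<in> {n. fmult \<gamma> N n \<noteq> 0}"
    then have sq: "squarefree n" and nz: "(\<Prod>p\<in>prime_factors n. fprime \<gamma> N p) \<noteq> 0"
      by (auto simp: fmult_def split: if_splits)
    have "prime_factors n \<subseteq> Pset \<gamma> N"
      using nz by (auto simp: fprime_def split: if_splits)
    then show "n \<in> Prod ` Pow (Pset \<gamma> N)"
      using squarefree_eq_prod_prime_factors[OF sq] by blast
  qed
  then show ?thesis by (rule finite_subset) (simp add: finite_Pset)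
qed

lemma finite_Mcal: "finite (Mcal \<gamma> a N)"
  unfolding Mcal_def using finite_fmult_support by auto

lemma zero_notin_Mcal: "0 \<notin> Mcal \<gamma> a N"
  by (simp add: Mcal_def fmult_def)

definition window_index :: "real \<Rightarrow> real \<Rightarrow> int" where
  "window_index T x = \<lfloor>ln x / ln (1 + 1/T)\<rfloor>"

lemma one_plus_inverse_powi:
  fixes T :: real
  assumes "T > 0"
  shows "(1 + 1/T) powi j = exp (of_int j * ln (1 + 1/T))"
proof -
  have "0 < 1 + 1/T" using assms by (intro add_pos_pos) auto
  then show ?thesis by (metis exp_ln exp_power_int)
qed

lemma mem_Ival_iff_ln:
  assumes "T > 0" "x > 0"
  shows "x \<in> Ival T j \<longleftrightarrow> of_int j * ln (1 + 1/T) \<le> ln x \<and> ln x < of_int (j + 1) * ln (1 + 1/T)"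
  unfolding Ival_def one_plus_inverse_powi[OF assms(1)] mem_Collect_eq
  using assms(2) by (metis exp_le_cancel_iff exp_less_cancel_iff exp_ln)

lemma mem_Ival_iff_window_index:
  assumes T: "T > 0" and x: "x > 0"
  shows "x \<in> Ival T j \<longleftrightarrow> j = window_index T x"
proof -
  have L: "ln (1 + 1/T) > 0" using T by (intro ln_gt_zero) simp
  have "x \<in> Ival T j \<longleftrightarrow> of_int j \<le> ln x / ln (1 + 1/T) \<and> ln x / ln (1 + 1/T) < of_int j + 1"
    unfolding mem_Ival_iff_ln[OF T x] using L by (simp add: pos_le_divide_eq pos_divide_less_eq)
  then show ?thesis unfolding window_index_def by (metis floor_eq_iff)
qed

lemma Jset_eq_window_index_image:
  assumes "T > 0"
  shows "Jset \<gamma> a N T = (\<lambda>n. window_index T (real n)) ` Mcal \<gamma> a N"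
proof -
  have "real n > 0" if "n \<in> Mcal \<gamma> a N" for n
    using that zero_notin_Mcal by (cases n) auto
  then show ?thesis
    unfolding Jset_def using mem_Ival_iff_window_index[OF assms] by auto
qed

lemma finite_Jset: "T > 0 \<Longrightarrow> finite (Jset \<gamma> a N T)"
  by (simp add: Jset_eq_window_index_image finite_Mcal)

lemma mj_in_Mcal_Ival:
  assumes "T > 0" "j \<in> Jset \<gamma> a N T"
  shows "mj \<gamma> a N T j \<in> Mcal \<gamma> a N \<and> real (mj \<gamma> a N T j) \<in> Ival T j"
proof -
  define S where "S = {n \<in> Mcal \<gamma> a N. real n \<in> Ival T j}"
  have "S \<noteq> {}" "finite S" using assms(2) finite_Mcal by (auto simp: S_def Jset_def)
  then have "Min S \<in> S" by (rule Min_in[rotated])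
  then show ?thesis by (simp add: mj_def S_def)
qed

lemma mj_pos: "T > 0 \<Longrightarrow> j \<in> Jset \<gamma> a N T \<Longrightarrow> real (mj \<gamma> a N T j) > 0"
  using mj_in_Mcal_Ival zero_notin_Mcal by (metis of_nat_0_less_iff gr0I)

lemma window_index_mj:
  assumes "T > 0" "j \<in> Jset \<gamma> a N T"
  shows "window_index T (real (mj \<gamma> a N T j)) = j"
  using mj_in_Mcal_Ival[OF assms] mem_Ival_iff_window_index[OF assms(1) mj_pos[OF assms]] by simp

lemma inj_on_mj: "T > 0 \<Longrightarrow> inj_on (mj \<gamma> a N T) (Jset \<gamma> a N T)"
  by (metis inj_onI window_index_mj)

lemma rfun_mj:
  assumes "T > 0" "j \<in> Jset \<gamma> a N T"
  shows "rfun \<gamma> a N T (mj \<gamma> a N T j) = rj \<gamma> a N T j"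
proof -
  have "(THE j'. j' \<in> Jset \<gamma> a N T \<and> mj \<gamma> a N T j' = mj \<gamma> a N T j) = j"
    using assms inj_on_mj[OF assms(1)] by (intro the_equality) (auto dest: inj_onD)
  then show ?thesis by (simp add: rfun_def)
qed

lemma Rfun_eq_sum_Jset:
  assumes T: "T > 0"
  shows "Rfun \<gamma> a N T t = (\<Sum>j\<in>Jset \<gamma> a N T. complex_of_real (rj \<gamma> a N T j) *
           exp (- (\<i> * complex_of_real t) * complex_of_real (ln (real (mj \<gamma> a N T j)))))"
proof -
  have "Rfun \<gamma> a N T t = (\<Sum>j\<in>Jset \<gamma> a N T. complex_of_real (rfun \<gamma> a N T (mj \<gamma> a N T j)) *
          of_nat (mj \<gamma> a N T j) powr (- (\<i> * complex_of_real t)))"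
    unfolding Rfun_def Mprime_def by (simp add: sum.reindex[OF inj_on_mj[OF T]])
  also have "\<dots> = (\<Sum>j\<in>Jset \<gamma> a N T. complex_of_real (rj \<gamma> a N T j) *
           exp (- (\<i> * complex_of_real t) * complex_of_real (ln (real (mj \<gamma> a N T j)))))"
  proof (intro sum.cong refl)
    fix j assume j: "j \<in> Jset \<gamma> a N T"
    have "mj \<gamma> a N T j > 0" using mj_pos[OF T j] by simp
    then show "complex_of_real (rfun \<gamma> a N T (mj \<gamma> a N T j)) * of_nat (mj \<gamma> a N T j) powr (- (\<i> * complex_of_real t)) =
        complex_of_real (rj \<gamma> a N T j) * exp (- (\<i> * complex_of_real t) * complex_of_real (ln (real (mj \<gamma> a N T j))))"
      by (simp add: rfun_mj[OF T j] powr_def)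
  qed
  finally show ?thesis .
qed

lemma widened_windows_containing_subset:
  fixes T x :: real
  assumes T: "T > 0" and x: "x > 0"
  shows "{j. (1 + 1/T) powi (j - 1) \<le> x \<and> x \<le> (1 + 1/T) powi (j + 2)}
           \<subseteq> {window_index T x - 2 .. window_index T x + 1}"
proof
  define L where "L = ln (1 + 1/T)"
  define w where "w = window_index T x"
  have L: "L > 0" unfolding L_def using T by (intro ln_gt_zero) simp
  have w: "of_int w * L \<le> ln x" "ln x < of_int (w + 1) * L"
    using mem_Ival_iff_window_index[OF T x] mem_Ival_iff_ln[OF T x] by (auto simp: w_def L_def)
  fix j assume "j \<in> {j. (1 + 1/T) powi (j - 1) \<le> x \<and> x \<le> (1 + 1/T) powi (j + 2)}"
  then have "exp (of_int (j - 1) * L) \<le> x" "x \<le> exp (of_int (j + 2) * L)"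
    by (simp_all add: one_plus_inverse_powi[OF T] L_def)
  then have "of_int (j - 1) * L \<le> ln x" "ln x \<le> of_int (j + 2) * L"
    using x by (simp add: ln_ge_iff, metis exp_gt_zero ln_exp ln_le_cancel_iff)
  then have "of_int (j - 1) * L < of_int (w + 1) * L" "of_int w * L \<le> of_int (j + 2) * L"
    using w by linarith+
  then have "j - 1 < w + 1" "w \<le> j + 2"
    using L by (simp_all add: mult_less_cancel_right mult_le_cancel_right)
  then show "j \<in> {window_index T x - 2 .. window_index T x + 1}" by (simp add: w_def)
qed

lemma sum_rj_squared_le:
  assumes T: "T > 0"
  shows "(\<Sum>j\<in>Jset \<gamma> a N T. (rj \<gamma> a N T j)^2) \<le> 4 * (\<Sum>n\<in>Mcal \<gamma> a N. (fmult \<gamma> N n)^2)"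
proof -
  define M where "M = Mcal \<gamma> a N"
  define J where "J = Jset \<gamma> a N T"
  define near where "near = (\<lambda>j n. (1 + 1/T) powi (j - 1) \<le> real n \<and> real n \<le> (1 + 1/T) powi (j + 2))"
  have rj_squared: "(rj \<gamma> a N T j)^2 = (\<Sum>n\<in>{n\<in>M. near j n}. (fmult \<gamma> N n)^2)" for j
    unfolding rj_def M_def near_def by (rule real_sqrt_pow2) (auto intro: sum_nonneg)
  have card_near: "card {j\<in>J. near j n} \<le> 4" if n: "n \<in> M" for n
  proof -
    define w where "w = window_index T (real n)"
    have pos: "real n > 0" using n zero_notin_Mcal by (cases n) (auto simp: M_def)
    have "{j\<in>J. near j n} \<subseteq> {w - 2 .. w + 1}"
      using widened_windows_containing_subset[OF T pos] unfolding near_def w_def by blast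
    then have "card {j\<in>J. near j n} \<le> card {w - 2 .. w + 1}" by (intro card_mono) auto
    then show ?thesis by simp
  qed
  have "(\<Sum>j\<in>J. (rj \<gamma> a N T j)^2) = (\<Sum>n\<in>M. \<Sum>j\<in>{j\<in>J. near j n}. (fmult \<gamma> N n)^2)"
    unfolding rj_squared using finite_Jset[OF T] finite_Mcal
    by (intro sum.swap_restrict) (simp_all add: J_def M_def)
  also have "\<dots> \<le> (\<Sum>n\<in>M. 4 * (fmult \<gamma> N n)^2)"
    using card_near by (intro sum_mono) (simp add: mult_right_mono)
  finally show ?thesis by (simp add: J_def M_def sum_distrib_left)
qed

theorem lemma5:
  fixes \<gamma> a \<kappa> :: real
  assumes "0 < \<gamma>" "\<gamma> < 1" "1 < a" "a < 1 / \<gamma>" "0 < \<kappa>" "\<kappa> \<le> 1"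
  shows "\<exists>C T0. \<forall>T\<ge>T0. let N = nat \<lfloor>T powr \<kappa>\<rfloor> in
           (\<lambda>t. (cmod (Rfun \<gamma> a N T t))^2 * Phi (t / T)) integrable_on UNIV \<and>
           integral UNIV (\<lambda>t. (cmod (Rfun \<gamma> a N T t))^2 * Phi (t / T))
             \<le> C * T * (\<Sum>n\<in>Mcal \<gamma> a N. (fmult \<gamma> N n)^2)"
proof (intro exI allI impI)
  define C0 :: real where "C0 = sqrt (2*pi) * exp (3/8) * (2 / (1 - exp (-1/4)))"
  fix T :: real assume T: "T \<ge> 2"
  define N where "N = nat \<lfloor>T powr \<kappa>\<rfloor>"
  have T0: "T > 0" using T by simp
  have windows: "of_int j * ln (1 + 1/T) \<le> ln (real (mj \<gamma> a N T j)) \<and>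
      ln (real (mj \<gamma> a N T j)) < of_int (j + 1) * ln (1 + 1/T)" if "j \<in> Jset \<gamma> a N T" for j
    using mj_in_Mcal_Ival[OF T0 that] mem_Ival_iff_ln[OF T0 mj_pos[OF T0 that]] by simp
  note mean_value = gaussian_mean_value_le[OF finite_Jset[OF T0, of \<gamma> a N] T0 ln_one_plus_inverse_ge[OF T] windows,
      where c = "rj \<gamma> a N T", folded Rfun_eq_sum_Jset[OF T0] C0_def]
  have "C0 * T * (\<Sum>j\<in>Jset \<gamma> a N T. (rj \<gamma> a N T j)^2) \<le> C0 * T * (4 * (\<Sum>n\<in>Mcal \<gamma> a N. (fmult \<gamma> N n)^2))"
    using sum_rj_squared_le[OF T0] T0 by (intro mult_left_mono) (auto simp: C0_def)
  with mean_value show "let N = nat \<lfloor>T powr \<kappa>\<rfloor> in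
           (\<lambda>t. (cmod (Rfun \<gamma> a N T t))^2 * Phi (t / T)) integrable_on UNIV \<and>
           integral UNIV (\<lambda>t. (cmod (Rfun \<gamma> a N T t))^2 * Phi (t / T))
             \<le> (4 * C0) * T * (\<Sum>n\<in>Mcal \<gamma> a N. (fmult \<gamma> N n)^2)"
    by (simp add: Let_def N_def[symmetric] mult_ac)
qed

end
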